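(* Assume there exist $P,\bar P\in\mathcal S^d$ solving $$\gamma[A^\top P+2Q]\big(A+(B_1\Gamma_1+B_2\Gamma_2)P\big)=P,$$ $$\gamma\big[(A+\bar A)^\top\bar P+2(Q+\bar Q)\big]\big[(A+\bar A)+\big((B_1+\bar B_1)\Lambda_1+(B_2+\bar B_2)\Lambda_2\big)\bar P\big]=\bar P.$$ Consider the controls $u_{i,t}=\Gamma_iP(x_t-\bar x_t)+\Lambda_i\bar P\bar x_t$, $i=1,2$, where $x$ is the state process controlled by $(u_{1,t},u_{2,t})$ and $\bar x_t=\mathbb E[x_t\mid\mathcal F^0]$, and define $p_t=P(x_t-\bar x_t)+\bar P\bar x_t$, $t\ge0$. Then $p$ is an adjoint process, and the pair $(u_1,u_2)$ satisfies the equilibrium condition: for all $t\ge0$, $$B_1^\top p_t+2R_1u_{1,t}+\bar B_1^\top\bar p_t+2\bar R_1\bar u_{1,t}=0,\qquad B_2^\top p_t-2R_2u_{2,t}+\bar B_2^\top\bar p_t-2\bar R_2\bar u_{2,t}=0.$$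
   Context: $\mathcal S^d$ denotes symmetric $d\times d$ real matrices. Fix $d,\ell\ge1$, $\gamma\in(0,1]$, $A,\bar A\in\mathbb R^{d\times d}$, $B_1,\bar B_1,B_2,\bar B_2\in\mathbb R^{d\times\ell}$, $Q,\bar Q\in\mathcal S^d$, $R_1,\bar R_1,R_2,\bar R_2\in\mathcal S^\ell$ with $R_i$ and $R_i+\bar R_i$ positive definite. Define for $i=1,2$: $\Gamma_i=(-1)^i\frac12R_i^{-1}B_i^\top$ and $\Lambda_i=(-1)^i\frac12(R_i+\bar R_i)^{-1}(B_i+\bar B_i)^\top$. Probability space $(\Omega,\mathcal F,\mathbb P)=(\Omega^0\times\Omega^1,\mathcal F^0\otimes\mathcal F^1,\mathbb P^0\otimes\mathbb P^1)$; noises $\epsilon^0_t(\omega)=\tilde\epsilon^0_t(\omega^0)$, $\epsilon^1_t(\omega)=\tilde\epsilon^1_t(\omega^1)$, $t\ge0$, where $(\tilde\epsilon^j_t)_{t\ge1}$ are i.i.d. mean-zero square integrable $\mathbb R^d$-valued and $\tilde\epsilon^j_0\sim\mu^j_0$ is independent of them. $\mathcal F_t=\sigma(\epsilon^0_s,\epsilon^1_s:s\le t)$; for a random variable $\xi$, $\bar\xi=\mathbb E[\xi\mid\mathcal F^0]$ (integration over $\omega^1$). The state controlled by $(u_1,u_2)$ is $x_0=\epsilon^0_0+\epsilon^1_0$, $x_{t+1}=Ax_t+\bar A\bar x_t+B_1u_{1,t}+\bar B_1\bar u_{1,t}+B_2u_{2,t}+\bar B_2\bar u_{2,t}+\epsilon^0_{t+1}+\epsilon^1_{t+1}$.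 An adjoint process (for state $x$) is an $\mathbb R^d$-valued $(\mathcal F_t)$-adapted process $p$ with $p_t=\gamma\mathbb E[A^\top p_{t+1}+2Qx_{t+1}+\bar A^\top\bar p_{t+1}+2\bar Q\bar x_{t+1}\mid\mathcal F_t]$ for all $t\ge0$. *)

theory Defs
  imports "HOL-Analysis.Analysis" "HOL-Probability.Probability"
begin

definition symmetric_mat :: "real^'n^'n \<Rightarrow> bool" where
  "symmetric_mat M \<longleftrightarrow> transpose M = M"

definition pos_def_mat :: "real^'n^'n \<Rightarrow> bool" where
  "pos_def_mat M \<longleftrightarrow> symmetric_mat M \<and> (\<forall>v. v \<noteq> 0 \<longrightarrow> 0 < v \<bullet> (M *v v))"

definition gain :: "nat \<Rightarrow> real^'l^'l \<Rightarrow> real^'l^'d \<Rightarrow> real^'d^'l" where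
  "gain i R B = (((-1) ^ i) / 2) *\<^sub>R (matrix_inv R ** transpose B)"

text \<open>The operator xi |-> xi-bar = E[xi | F^0], i.e. integration over omega^1,
  on the product space Omega^0 x Omega^1.\<close>
definition cbar :: "'w1 measure \<Rightarrow> ('w0 \<times> 'w1 \<Rightarrow> 'b::{banach,second_countable_topology})
    \<Rightarrow> 'w0 \<times> 'w1 \<Rightarrow> 'b" where
  "cbar M1 \<xi> \<omega> = (LINT w|M1. \<xi> (fst \<omega>, w))"

definition noise_filt :: "'w0 measure \<Rightarrow> 'w1 measure \<Rightarrow> (nat \<Rightarrow> 'w0 \<Rightarrow> real^'d)
    \<Rightarrow> (nat \<Rightarrow> 'w1 \<Rightarrow> real^'d) \<Rightarrow> nat \<Rightarrow> ('w0 \<times> 'w1) measure" where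
  "noise_filt M0 M1 e0 e1 t = sigma (space (M0 \<Otimes>\<^sub>M M1))
     (\<Union>s\<in>{..t}. {(\<lambda>\<omega>. e0 s (fst \<omega>)) -` B \<inter> space (M0 \<Otimes>\<^sub>M M1) | B. B \<in> sets borel}
              \<union> {(\<lambda>\<omega>. e1 s (snd \<omega>)) -` B \<inter> space (M0 \<Otimes>\<^sub>M M1) | B. B \<in> sets borel})"

definition vcond_exp :: "'a measure \<Rightarrow> 'a measure \<Rightarrow> ('a \<Rightarrow> real^'n) \<Rightarrow> 'a \<Rightarrow> real^'n" where
  "vcond_exp M F X \<omega> = (\<chi> i. real_cond_exp M F (\<lambda>\<eta>. X \<eta> $ i) \<omega>)"

definition adjoint_process ::
  "'w0 measure \<Rightarrow> 'w1 measure \<Rightarrow> (nat \<Rightarrow> 'w0 \<Rightarrow> real^'d) \<Rightarrow> (nat \<Rightarrow> 'w1 \<Rightarrow> real^'d)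
   \<Rightarrow> real \<Rightarrow> real^'d^'d \<Rightarrow> real^'d^'d \<Rightarrow> real^'d^'d \<Rightarrow> real^'d^'d
   \<Rightarrow> (nat \<Rightarrow> 'w0 \<times> 'w1 \<Rightarrow> real^'d) \<Rightarrow> (nat \<Rightarrow> 'w0 \<times> 'w1 \<Rightarrow> real^'d) \<Rightarrow> bool" where
  "adjoint_process M0 M1 e0 e1 \<gamma> A Abar Q Qbar x p \<longleftrightarrow>
     (\<forall>t. p t \<in> borel_measurable (noise_filt M0 M1 e0 e1 t)) \<and>
     (\<forall>t. AE \<omega> in (M0 \<Otimes>\<^sub>M M1).
        p t \<omega> = \<gamma> *\<^sub>R vcond_exp (M0 \<Otimes>\<^sub>M M1) (noise_filt M0 M1 e0 e1 t)
          (\<lambda>\<eta>. transpose A *v p (Suc t) \<eta> + 2 *\<^sub>R (Q *v x (Suc t) \<eta>)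
               + transpose Abar *v cbar M1 (p (Suc t)) \<eta> + 2 *\<^sub>R (Qbar *v cbar M1 (x (Suc t)) \<eta>)) \<omega>)"

definition noise_seq :: "'w measure \<Rightarrow> (nat \<Rightarrow> 'w \<Rightarrow> real^'d) \<Rightarrow> bool" where
  "noise_seq M e \<longleftrightarrow>
     (\<forall>t. e t \<in> borel_measurable M) \<and>
     prob_space.indep_vars M (\<lambda>_. borel) e UNIV \<and>
     (\<forall>t\<ge>1. distr M borel (e t) = distr M borel (e 1)) \<and>
     (\<forall>t. integrable M (e t) \<and> integrable M (\<lambda>\<omega>. (norm (e t \<omega>))\<^sup>2)) \<and>
     (\<forall>t\<ge>1. (LINT \<omega>|M. e t \<omega>) = 0)"

end

theory Submission
  imports Defs
begin

text \<open>Under the feedback controls the state splits as x_t(\<omega>) = a_t(\<omega>0) + b_t(\<omega>1): the common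
  part a is driven by \<epsilon>0 through the closed-loop matrix of the mean, the idiosyncratic part b
  by \<epsilon>1 through the closed-loop matrix of the deviation, and b is centred. Hence xbar_t = a_t and
  x_t - xbar_t = b_t, and the equilibrium conditions reduce to the identities
  R_i \<Gamma>_i = (-1)^i B_i^T / 2 that define the gains. In the adjoint equation the two Riccati
  equations turn the argument of the conditional expectation into p_t / \<gamma> plus a linear image of
  the fresh noises \<epsilon>0_{t+1}, \<epsilon>1_{t+1}; these are centred and independent of F_t,
  so they drop out.\<close>

section \<open>Matrix identities behind the gains\<close>

lemma pos_def_mat_invertible:
  assumes "pos_def_mat R"
  shows "invertible R"
proof -
  have "R *v v = 0 \<Longrightarrow> v = 0" for v
    using assms unfolding pos_def_mat_def by (metis inner_zero_right less_irrefl)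
  then show ?thesis
    using matrix_left_invertible_ker invertible_left_inverse by blast
qed

lemma matrix_mul_matrix_inv_right:
  assumes "invertible R"
  shows "R ** matrix_inv R = mat 1"
  using assms unfolding invertible_def matrix_inv_def by (metis (mono_tags, lifting) someI_ex)

lemma matrix_mul_gain:
  assumes "pos_def_mat R"
  shows "R ** gain i R B = (((-1) ^ i) / 2) *\<^sub>R transpose B"
  using matrix_mul_matrix_inv_right[OF pos_def_mat_invertible[OF assms]] unfolding gain_def
  by (simp add: matrix_scalar_ac scalar_matrix_assoc[symmetric] matrix_mul_assoc)

lemma transpose_add: "transpose (A + B) = transpose A + transpose (B :: 'a::semiring_1^'n^'m)"
  by (simp add: transpose_def vec_eq_iff)

lemma first_order_identity:
  fixes R Rbar :: "real^'l^'l" and B Bbar :: "real^'l^'d" and G L :: "real^'d^'l"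
  assumes RG: "R ** G = k *\<^sub>R transpose B" and RL: "(R + Rbar) ** L = k *\<^sub>R transpose (B + Bbar)"
    and "c * k = -1"
  shows "transpose B *v (v + w) + c *\<^sub>R (R *v (G *v v + L *v w))
       + transpose Bbar *v w + c *\<^sub>R (Rbar *v (L *v w)) = 0"
proof -
  define bv bw bbw where "bv = transpose B *v v" and "bw = transpose B *v w" and "bbw = transpose Bbar *v w"
  have "R *v (G *v v) = k *\<^sub>R bv"
    unfolding bv_def by (metis RG matrix_vector_mul_assoc scaleR_matrix_vector_assoc)
  moreover have "R *v (L *v w) + Rbar *v (L *v w) = k *\<^sub>R (bw + bbw)"
    unfolding bw_def bbw_def
    by (metis RL matrix_vector_mul_assoc matrix_vector_mult_add_rdistrib scaleR_matrix_vector_assoc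
        transpose_add vector_add_ldistrib)
  ultimately have "bv + bw + c *\<^sub>R (R *v (G *v v + L *v w)) + bbw + c *\<^sub>R (Rbar *v (L *v w))
      = (1 + c * k) *\<^sub>R (bv + bw + bbw)"
    by (simp add: matrix_vector_right_distrib algebra_simps flip: scaleR_add_right)
  then show ?thesis
    using assms(3) unfolding bv_def bw_def bbw_def by (simp add: matrix_vector_right_distrib)
qed

section \<open>Random vectors and linear recursions driven by noise\<close>

lemma borel_measurable_bounded_linear_compose:
  assumes "bounded_linear h" "f \<in> borel_measurable N"
  shows "(\<lambda>\<omega>. h (f \<omega>)) \<in> borel_measurable N"
  using assms(2) by (rule measurable_compose[OF _ borel_measurable_continuous_onI])
    (simp add: linear_continuous_on assms(1))

lemmas borel_measurable_matrix_vector_mult [measurable (raw)] =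
  borel_measurable_bounded_linear_compose[OF matrix_vector_mul_bounded_linear]

lemma integrable_compose_fst:
  fixes f :: "'a \<Rightarrow> 'b::{banach,second_countable_topology}"
  assumes "prob_space M1" and f: "integrable M0 f"
  shows "integrable (M0 \<Otimes>\<^sub>M M1) (\<lambda>\<omega>. f (fst \<omega>))"
  using integrable_distr_eq[OF measurable_fst[of M0 M1] borel_measurable_integrable[OF f]] f
    prob_space.distr_pair_fst[OF assms(1), of M0]
  by simp

lemma integrable_compose_snd:
  fixes f :: "'a \<Rightarrow> 'b::{banach,second_countable_topology}"
  assumes "prob_space M0" "prob_space M1" and f: "integrable M1 f"
  shows "integrable (M0 \<Otimes>\<^sub>M M1) (\<lambda>\<omega>. f (snd \<omega>))"
proof -
  interpret pair_sigma_finite M1 M0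
    using assms by (intro pair_sigma_finite.intro prob_space_imp_sigma_finite)
  show ?thesis
    using integrable_product_swap[OF integrable_compose_fst[OF assms(1) f]] by (simp add: case_prod_beta')
qed

primrec linear_recursion ::
  "real^'n^'n \<Rightarrow> (nat \<Rightarrow> 'w \<Rightarrow> real^'n) \<Rightarrow> real^'n \<Rightarrow> nat \<Rightarrow> 'w \<Rightarrow> real^'n" where
  "linear_recursion K e c 0 = (\<lambda>w. e 0 w + c)"
| "linear_recursion K e c (Suc t) = (\<lambda>w. K *v linear_recursion K e c t w + e (Suc t) w)"

lemma measurable_linear_recursion:
  assumes "\<And>s. s \<le> t \<Longrightarrow> (\<lambda>\<omega>. e s (f \<omega>)) \<in> borel_measurable N"
  shows "(\<lambda>\<omega>. linear_recursion K e c t (f \<omega>)) \<in> borel_measurable N"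
  using assms by (induction t) auto

lemma integrable_linear_recursion:
  assumes "finite_measure N" and "\<And>t. integrable N (e t)"
  shows "integrable N (linear_recursion K e c t)"
  using assms by (induction t)
    (auto intro: finite_measure.integrable_const integrable_bounded_linear[OF matrix_vector_mul_bounded_linear])

lemma integral_linear_recursion_eq_0:
  assumes "prob_space N" and e: "\<And>t. integrable N (e t)" "\<And>t. t \<ge> 1 \<Longrightarrow> (LINT w|N. e t w) = 0"
  shows "(LINT w|N. linear_recursion K e (- (LINT w|N. e 0 w)) t w) = 0"
proof (induction t)
  case 0
  interpret prob_space N by fact
  show ?case using e by (simp add: Bochner_Integration.integral_diff prob_space)
next
  case (Suc t)
  have "integrable N (linear_recursion K e (- (LINT w|N. e 0 w)) t)"
    using assms by (intro integrable_linear_recursion) (auto simp: prob_space_def)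
  then show ?case
    using Suc e
    by (simp add: Bochner_Integration.integral_add integrable_bounded_linear[OF matrix_vector_mul_bounded_linear]
        integral_bounded_linear[OF matrix_vector_mul_bounded_linear])
qed

section \<open>Fresh noise is orthogonal to the past\<close>

definition history :: "'w measure \<Rightarrow> (nat \<Rightarrow> 'w \<Rightarrow> 'b::topological_space) \<Rightarrow> nat \<Rightarrow> 'w measure" where
  "history M e t = sigma (space M) (\<Union>s\<in>{..t}. {e s -` B \<inter> space M | B. B \<in> sets borel})"

lemma space_history [simp]: "space (history M e t) = space M"
  unfolding history_def by (simp add: space_measure_of_conv)

lemma sets_history:
  "sets (history M e t) = sigma_sets (space M) (\<Union>s\<in>{..t}. {e s -` B \<inter> space M | B. B \<in> sets borel})"
  unfolding history_def by (rule sets_measure_of) auto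

lemma measurable_history: "s \<le> t \<Longrightarrow> e s \<in> borel_measurable (history M e t)"
  by (rule measurableI) (auto simp: sets_history)

lemma sets_history_subset:
  "(\<And>s. s \<le> t \<Longrightarrow> e s \<in> borel_measurable M) \<Longrightarrow> sets (history M e t) \<subseteq> sets M"
  unfolding sets_history by (intro sets.sigma_sets_subset) auto

lemma (in prob_space) indep_set_history_next:
  assumes "indep_vars (\<lambda>_. borel) e UNIV"
  shows "indep_set (sets (history M e t)) (sigma_sets (space M) {e (Suc t) -` B \<inter> space M | B. B \<in> sets borel})"
proof -
  define E where "E s = {e s -` B \<inter> space M | B. B \<in> sets borel}" for s
  define I where "I = case_bool {..t} {Suc t}"
  have "indep_sets (\<lambda>b. sigma_sets (space M) (\<Union>s\<in>I b. E s)) UNIV"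
  proof (rule indep_sets_collect_sigma)
    show "indep_sets E (\<Union>b\<in>UNIV. I b)"
      using assms unfolding indep_vars_def2 E_def by (blast intro: indep_sets_mono_index)
    show "Int_stable (E s)" for s
      unfolding E_def setcompr_eq_image
      by (rule Int_stableI_image) (rule_tac x="i \<inter> j" in bexI, auto)
    show "disjoint_family_on I UNIV"
      unfolding disjoint_family_on_def I_def by (auto split: bool.split)
  qed
  then show ?thesis
    unfolding indep_set_def sets_history E_def I_def
    by (rule indep_sets_mono_sets) (auto split: bool.split)
qed

lemma (in prob_space) indep_var_history_next:
  fixes h :: "'b::topological_space \<Rightarrow> real"
  assumes indep: "indep_vars (\<lambda>_. borel) e UNIV"
    and S: "S \<in> sets (history M e t)" and h: "h \<in> borel_measurable borel"
  shows "indep_var borel (indicator S) borel (\<lambda>\<omega>. h (e (Suc t) \<omega>))"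
proof -
  have e: "e s \<in> borel_measurable M" for s
    using indep unfolding indep_vars_def by simp
  have history_events: "sets (history M e t) \<subseteq> events"
    using e by (rule sets_history_subset)
  have "(indicator S :: 'a \<Rightarrow> real) \<in> borel_measurable (history M e t)"
    using S by simp
  then have past: "sigma_sets (space M) {indicator S -` A \<inter> space M | A::real set. A \<in> sets borel}
      \<subseteq> sets (history M e t)"
    by (intro sets.sigma_sets_subset[of _ "history M e t", simplified]) (auto dest: measurable_sets)
  have future: "sigma_sets (space M) {(\<lambda>\<omega>. h (e (Suc t) \<omega>)) -` A \<inter> space M | A. A \<in> sets borel}
      \<subseteq> sigma_sets (space M) {e (Suc t) -` B \<inter> space M | B. B \<in> sets borel}"
  proof (rule sigma_sets_mono', safe)
    fix A :: "real set" assume "A \<in> sets borel"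
    with h have "h -` A \<in> sets borel"
      by (metis measurable_sets space_borel inf_top.right_neutral)
    then show "\<exists>B. (\<lambda>\<omega>. h (e (Suc t) \<omega>)) -` A \<inter> space M = e (Suc t) -` B \<inter> space M \<and> B \<in> sets borel"
      by (intro exI[of _ "h -` A"]) auto
  qed
  note indep_past_future = indep_set_history_next[OF indep, of t, unfolded indep_sets2_eq]
  show ?thesis
    unfolding indep_var_eq indep_sets2_eq
  proof (intro conjI ballI)
    show "sigma_sets (space M) {indicator S -` A \<inter> space M | A::real set. A \<in> sets borel} \<subseteq> events"
      using past history_events by (rule order_trans)
    show "sigma_sets (space M) {(\<lambda>\<omega>. h (e (Suc t) \<omega>)) -` A \<inter> space M | A. A \<in> sets borel} \<subseteq> events"
      using future indep_past_future by (meson order_trans)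
    show "prob (a \<inter> b) = prob a * prob b"
      if "a \<in> sigma_sets (space M) {indicator S -` A \<inter> space M | A::real set. A \<in> sets borel}"
        and "b \<in> sigma_sets (space M) {(\<lambda>\<omega>. h (e (Suc t) \<omega>)) -` A \<inter> space M | A. A \<in> sets borel}"
      for a b
      using that past future indep_past_future by blast
  qed (use S history_events e h in auto)
qed

lemma (in prob_space) integral_indicator_history_mult_next:
  fixes e :: "nat \<Rightarrow> 'a \<Rightarrow> real^'d" and h :: "real^'d \<Rightarrow> real"
  assumes noise: "noise_seq M e" and S: "S \<in> sets (history M e t)" and h: "bounded_linear h"
  shows "(\<integral>\<omega>. indicator S \<omega> * h (e (Suc t) \<omega>) \<partial>M) = 0"
proof -
  have e: "indep_vars (\<lambda>_. borel) e UNIV" "\<And>t. integrable M (e t)" "(LINT \<omega>|M. e (Suc t) \<omega>) = 0"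
    and "S \<in> events"
    using noise sets_history_subset[of t e M] S unfolding noise_seq_def by auto
  have "h \<in> borel_measurable borel"
    using h by (simp add: borel_measurable_continuous_onI linear_continuous_on)
  then have "(\<integral>\<omega>. indicator S \<omega> * h (e (Suc t) \<omega>) \<partial>M)
      = (\<integral>\<omega>. indicator S \<omega> \<partial>M) * (\<integral>\<omega>. h (e (Suc t) \<omega>) \<partial>M)"
    using indep_var_history_next[OF e(1) S] \<open>S \<in> events\<close>
    by (intro indep_var_lebesgue_integral integrable_bounded_linear[OF h e(2)])
      (auto simp: emeasure_eq_measure)
  also have "(\<integral>\<omega>. h (e (Suc t) \<omega>) \<partial>M) = 0"
    using integral_bounded_linear[OF h e(2)] e(3) linear_0[OF bounded_linear.linear[OF h]] by simp
  finally show ?thesis by simp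
qed

lemma integral_indicator_mult_snd_eq_0:
  fixes g :: "'b \<Rightarrow> real"
  assumes "prob_space M0" "prob_space M1"
    and A: "A \<in> sets (N0 \<Otimes>\<^sub>M N1)" "A \<in> sets (M0 \<Otimes>\<^sub>M M1)" and g: "integrable M1 g"
    and g_orth: "\<And>S. S \<in> sets N1 \<Longrightarrow> (\<integral>y. indicator S y * g y \<partial>M1) = 0"
  shows "(\<integral>\<omega>. indicator A \<omega> * g (snd \<omega>) \<partial>(M0 \<Otimes>\<^sub>M M1)) = 0"
proof -
  interpret pair_sigma_finite M0 M1
    using assms by (intro pair_sigma_finite.intro prob_space_imp_sigma_finite)
  have "integrable (M0 \<Otimes>\<^sub>M M1) (\<lambda>\<omega>. indicator A \<omega> * g (snd \<omega>))"
    using integrable_mult_indicator[OF A(2) integrable_compose_snd[OF assms(1,2) g]] by simp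
  then have "(\<integral>\<omega>. indicator A \<omega> * g (snd \<omega>) \<partial>(M0 \<Otimes>\<^sub>M M1))
      = (\<integral>x. (\<integral>y. indicator (Pair x -` A) y * g y \<partial>M1) \<partial>M0)"
    by (simp add: integral_fst'[symmetric] indicator_def)
  also have "\<dots> = 0"
    using g_orth sets_Pair1[OF A(1)] by simp
  finally show ?thesis .
qed

lemma integral_indicator_mult_fst_eq_0:
  fixes g :: "'a \<Rightarrow> real"
  assumes "prob_space M0" "prob_space M1"
    and A: "A \<in> sets (N0 \<Otimes>\<^sub>M N1)" "A \<in> sets (M0 \<Otimes>\<^sub>M M1)" and g: "integrable M0 g"
    and g_orth: "\<And>S. S \<in> sets N0 \<Longrightarrow> (\<integral>x. indicator S x * g x \<partial>M0) = 0"
  shows "(\<integral>\<omega>. indicator A \<omega> * g (fst \<omega>) \<partial>(M0 \<Otimes>\<^sub>M M1)) = 0"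
proof -
  interpret pair_sigma_finite M0 M1
    using assms by (intro pair_sigma_finite.intro prob_space_imp_sigma_finite)
  have split: "(\<lambda>\<omega>. indicator A \<omega> * g (fst \<omega>)) = (\<lambda>(x, y). indicator A (x, y) * g x)"
    by auto
  have "integrable (M0 \<Otimes>\<^sub>M M1) (\<lambda>\<omega>. indicator A \<omega> * g (fst \<omega>))"
    using integrable_mult_indicator[OF A(2) integrable_compose_fst[OF assms(2) g]] by simp
  then have "(\<integral>\<omega>. indicator A \<omega> * g (fst \<omega>) \<partial>(M0 \<Otimes>\<^sub>M M1))
      = (\<integral>y. (\<integral>x. indicator ((\<lambda>x. (x, y)) -` A) x * g x \<partial>M0) \<partial>M1)"
    unfolding split by (simp add: integral_snd indicator_def)
  also have "\<dots> = 0"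
    using g_orth sets_Pair2[OF A(1)] by simp
  finally show ?thesis .
qed

lemma space_noise_filt [simp]: "space (noise_filt M0 M1 e0 e1 t) = space (M0 \<Otimes>\<^sub>M M1)"
  unfolding noise_filt_def by (simp add: space_measure_of_conv)

lemma sets_noise_filt: "sets (noise_filt M0 M1 e0 e1 t) = sigma_sets (space (M0 \<Otimes>\<^sub>M M1))
     (\<Union>s\<in>{..t}. {(\<lambda>\<omega>. e0 s (fst \<omega>)) -` B \<inter> space (M0 \<Otimes>\<^sub>M M1) | B. B \<in> sets borel}
              \<union> {(\<lambda>\<omega>. e1 s (snd \<omega>)) -` B \<inter> space (M0 \<Otimes>\<^sub>M M1) | B. B \<in> sets borel})"
  unfolding noise_filt_def by (rule sets_measure_of) auto

lemma measurable_noise_filt_fst: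
  fixes e0 :: "nat \<Rightarrow> 'w0 \<Rightarrow> real^'d"
  assumes "s \<le> t"
  shows "(\<lambda>\<omega>. e0 s (fst \<omega>)) \<in> borel_measurable (noise_filt M0 M1 e0 e1 t)"
proof (rule measurableI)
  fix B :: "(real^'d) set" assume "B \<in> sets borel"
  then show "(\<lambda>\<omega>. e0 s (fst \<omega>)) -` B \<inter> space (noise_filt M0 M1 e0 e1 t) \<in> sets (noise_filt M0 M1 e0 e1 t)"
    unfolding sets_noise_filt space_noise_filt using assms by (intro sigma_sets.Basic UN_I[of s]) auto
qed auto

lemma measurable_noise_filt_snd:
  fixes e1 :: "nat \<Rightarrow> 'w1 \<Rightarrow> real^'d"
  assumes "s \<le> t"
  shows "(\<lambda>\<omega>. e1 s (snd \<omega>)) \<in> borel_measurable (noise_filt M0 M1 e0 e1 t)"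
proof (rule measurableI)
  fix B :: "(real^'d) set" assume "B \<in> sets borel"
  then show "(\<lambda>\<omega>. e1 s (snd \<omega>)) -` B \<inter> space (noise_filt M0 M1 e0 e1 t) \<in> sets (noise_filt M0 M1 e0 e1 t)"
    unfolding sets_noise_filt space_noise_filt using assms by (intro sigma_sets.Basic UN_I[of s]) auto
qed auto

lemma sets_noise_filt_subset:
  assumes "space N0 = space M0" "space N1 = space M1"
    and "\<And>s. s \<le> t \<Longrightarrow> e0 s \<in> borel_measurable N0" "\<And>s. s \<le> t \<Longrightarrow> e1 s \<in> borel_measurable N1"
  shows "sets (noise_filt M0 M1 e0 e1 t) \<subseteq> sets (N0 \<Otimes>\<^sub>M N1)"
proof -
  have space: "space (M0 \<Otimes>\<^sub>M M1) = space (N0 \<Otimes>\<^sub>M N1)"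
    using assms(1,2) by (simp add: space_pair_measure)
  have "(\<lambda>\<omega>. e0 s (fst \<omega>)) \<in> borel_measurable (N0 \<Otimes>\<^sub>M N1)"
    "(\<lambda>\<omega>. e1 s (snd \<omega>)) \<in> borel_measurable (N0 \<Otimes>\<^sub>M N1)" if "s \<le> t" for s
    using that assms(3,4) by measurable
  then show ?thesis
    unfolding sets_noise_filt space by (intro sets.sigma_sets_subset) (auto intro: measurable_sets)
qed

lemma integral_indicator_noise_filt_mult_next:
  fixes e0 :: "nat \<Rightarrow> 'w0 \<Rightarrow> real^'d" and e1 :: "nat \<Rightarrow> 'w1 \<Rightarrow> real^'d"
  assumes "prob_space M0" "prob_space M1" and noise: "noise_seq M0 e0" "noise_seq M1 e1"
    and A: "A \<in> sets (noise_filt M0 M1 e0 e1 t)"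
    and h: "bounded_linear (h0 :: real^'d \<Rightarrow> real)" "bounded_linear (h1 :: real^'d \<Rightarrow> real)"
  shows "(\<integral>\<omega>. indicator A \<omega> * (h0 (e0 (Suc t) (fst \<omega>)) + h1 (e1 (Suc t) (snd \<omega>))) \<partial>(M0 \<Otimes>\<^sub>M M1)) = 0"
proof -
  have e: "\<And>s. e0 s \<in> borel_measurable M0" "\<And>s. e1 s \<in> borel_measurable M1"
    "integrable M0 (e0 (Suc t))" "integrable M1 (e1 (Suc t))"
    using noise unfolding noise_seq_def by auto
  have "sets (noise_filt M0 M1 e0 e1 t) \<subseteq> sets (history M0 e0 t \<Otimes>\<^sub>M history M1 e1 t)"
    by (rule sets_noise_filt_subset) (simp_all add: measurable_history)
  with A have A_history: "A \<in> sets (history M0 e0 t \<Otimes>\<^sub>M history M1 e1 t)" ..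
  have "sets (noise_filt M0 M1 e0 e1 t) \<subseteq> sets (M0 \<Otimes>\<^sub>M M1)"
    by (rule sets_noise_filt_subset) (simp_all add: e(1,2))
  with A have A_sets: "A \<in> sets (M0 \<Otimes>\<^sub>M M1)" ..
  have h_int: "integrable M0 (\<lambda>x. h0 (e0 (Suc t) x))" "integrable M1 (\<lambda>y. h1 (e1 (Suc t) y))"
    using integrable_bounded_linear h e(3,4) by blast+
  have "(\<integral>\<omega>. indicator A \<omega> * h0 (e0 (Suc t) (fst \<omega>)) \<partial>(M0 \<Otimes>\<^sub>M M1)) = 0"
    using assms(1,2) A_history A_sets h_int(1)
      prob_space.integral_indicator_history_mult_next[OF assms(1) noise(1) _ h(1)]
    by (rule integral_indicator_mult_fst_eq_0)
  moreover have "(\<integral>\<omega>. indicator A \<omega> * h1 (e1 (Suc t) (snd \<omega>)) \<partial>(M0 \<Otimes>\<^sub>M M1)) = 0"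
    using assms(1,2) A_history A_sets h_int(2)
      prob_space.integral_indicator_history_mult_next[OF assms(2) noise(2) _ h(2)]
    by (rule integral_indicator_mult_snd_eq_0)
  moreover have "integrable (M0 \<Otimes>\<^sub>M M1) (\<lambda>\<omega>. indicator A \<omega> * h0 (e0 (Suc t) (fst \<omega>)))"
    "integrable (M0 \<Otimes>\<^sub>M M1) (\<lambda>\<omega>. indicator A \<omega> * h1 (e1 (Suc t) (snd \<omega>)))"
    using integrable_mult_indicator[OF A_sets integrable_compose_fst[OF assms(2) h_int(1)]]
      integrable_mult_indicator[OF A_sets integrable_compose_snd[OF assms(1,2) h_int(2)]]
    by simp_all
  ultimately show ?thesis
    by (simp add: distrib_left)
qed

section \<open>Conditional expectation given the noise filtration\<close>

lemma (in sigma_finite_subalgebra) vcond_exp_measurable_plus_orthogonal: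
  fixes Z V W :: "'a \<Rightarrow> real^'n"
  assumes V: "integrable M V" "V \<in> borel_measurable F" and W: "integrable M W"
    and W_orth: "\<And>A i. A \<in> sets F \<Longrightarrow> (\<integral>\<omega>. indicator A \<omega> * W \<omega> $ i \<partial>M) = 0"
    and Z: "\<And>\<omega>. \<omega> \<in> space M \<Longrightarrow> Z \<omega> = V \<omega> + W \<omega>"
  shows "AE \<omega> in M. vcond_exp M F Z \<omega> = V \<omega>"
proof -
  have V_i: "integrable M (\<lambda>\<omega>. V \<omega> $ i)" "(\<lambda>\<omega>. V \<omega> $ i) \<in> borel_measurable F" for i
    using V by (auto intro: integrable_bounded_linear[OF bounded_linear_vec_nth]
        borel_measurable_bounded_linear_compose[OF bounded_linear_vec_nth])
  have W_i: "integrable M (\<lambda>\<omega>. W \<omega> $ i)" for i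
    using W by (rule integrable_bounded_linear[OF bounded_linear_vec_nth])
  have Z_i: "integrable M (\<lambda>\<omega>. Z \<omega> $ i)" for i
    using Bochner_Integration.integrable_add[OF V_i(1)[of i] W_i[of i]]
      Bochner_Integration.integrable_cong[of M M "\<lambda>\<omega>. Z \<omega> $ i" "\<lambda>\<omega>. V \<omega> $ i + W \<omega> $ i"]
    by (simp add: Z)
  have "AE \<omega> in M. real_cond_exp M F (\<lambda>\<omega>. Z \<omega> $ i) \<omega> = V \<omega> $ i" for i
  proof (rule real_cond_exp_charact)
    fix A assume A: "A \<in> sets F"
    then have "A \<in> sets M" using subalg by (auto simp: subalgebra_def)
    have "(\<integral>\<omega>\<in>A. Z \<omega> $ i \<partial>M) = (\<integral>\<omega>. indicator A \<omega> * V \<omega> $ i + indicator A \<omega> * W \<omega> $ i \<partial>M)"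
      unfolding set_lebesgue_integral_def by (rule Bochner_Integration.integral_cong) (simp_all add: Z algebra_simps)
    also have "\<dots> = (\<integral>\<omega>\<in>A. V \<omega> $ i \<partial>M)"
      using W_orth[OF A] integrable_mult_indicator[OF \<open>A \<in> sets M\<close> V_i(1)]
        integrable_mult_indicator[OF \<open>A \<in> sets M\<close> W_i]
      by (simp add: Bochner_Integration.integral_add set_lebesgue_integral_def)
    finally show "(\<integral>\<omega>\<in>A. Z \<omega> $ i \<partial>M) = (\<integral>\<omega>\<in>A. V \<omega> $ i \<partial>M)" .
  qed (use V_i Z_i in auto)
  then have "AE \<omega> in M. \<forall>i\<in>UNIV. real_cond_exp M F (\<lambda>\<omega>. Z \<omega> $ i) \<omega> = V \<omega> $ i"
    by (intro AE_finite_allI) auto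
  then show ?thesis
    by eventually_elim (simp add: vcond_exp_def vec_eq_iff)
qed

lemma sigma_finite_subalgebra_noise_filt:
  assumes "prob_space M0" "prob_space M1"
    and "\<And>s. e0 s \<in> borel_measurable M0" "\<And>s. e1 s \<in> borel_measurable M1"
  shows "sigma_finite_subalgebra (M0 \<Otimes>\<^sub>M M1) (noise_filt M0 M1 e0 e1 t)"
proof (rule finite_measure_subalgebra_is_sigma_finite)
  have "sets (noise_filt M0 M1 e0 e1 t) \<subseteq> sets (M0 \<Otimes>\<^sub>M M1)"
    using assms(3,4) by (intro sets_noise_filt_subset) auto
  then show "finite_measure_subalgebra (M0 \<Otimes>\<^sub>M M1) (noise_filt M0 M1 e0 e1 t)"
    using prob_space_pair[OF assms(1,2)]
    unfolding finite_measure_subalgebra_def finite_measure_subalgebra_axioms_def subalgebra_def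
    by (auto simp: prob_space_def)
qed

section \<open>The closed-loop system\<close>

locale mean_field_feedback =
  fixes M0 :: "'w0 measure" and M1 :: "'w1 measure"
    and e0 :: "nat \<Rightarrow> 'w0 \<Rightarrow> real^'d" and e1 :: "nat \<Rightarrow> 'w1 \<Rightarrow> real^'d"
    and A Abar P Pbar :: "real^'d^'d"
    and B1 B1bar B2 B2bar :: "real^'l^'d"
    and G1 L1 G2 L2 :: "real^'d^'l"
    and x :: "nat \<Rightarrow> 'w0 \<times> 'w1 \<Rightarrow> real^'d"
    and u1 u2 :: "nat \<Rightarrow> 'w0 \<times> 'w1 \<Rightarrow> real^'l"
    and p :: "nat \<Rightarrow> 'w0 \<times> 'w1 \<Rightarrow> real^'d"
  assumes M0: "prob_space M0" and M1: "prob_space M1"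
    and noise0: "noise_seq M0 e0" and noise1: "noise_seq M1 e1"
    and u1_def: "\<And>t \<omega>. u1 t \<omega> = G1 *v (P *v (x t \<omega> - cbar M1 (x t) \<omega>)) + L1 *v (Pbar *v cbar M1 (x t) \<omega>)"
    and u2_def: "\<And>t \<omega>. u2 t \<omega> = G2 *v (P *v (x t \<omega> - cbar M1 (x t) \<omega>)) + L2 *v (Pbar *v cbar M1 (x t) \<omega>)"
    and x0: "\<And>\<omega>. \<omega> \<in> space (M0 \<Otimes>\<^sub>M M1) \<Longrightarrow> x 0 \<omega> = e0 0 (fst \<omega>) + e1 0 (snd \<omega>)"
    and xSuc: "\<And>t \<omega>. \<omega> \<in> space (M0 \<Otimes>\<^sub>M M1) \<Longrightarrow>
       x (Suc t) \<omega> = A *v x t \<omega> + Abar *v cbar M1 (x t) \<omega>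
                     + B1 *v u1 t \<omega> + B1bar *v cbar M1 (u1 t) \<omega>
                     + B2 *v u2 t \<omega> + B2bar *v cbar M1 (u2 t) \<omega>
                     + e0 (Suc t) (fst \<omega>) + e1 (Suc t) (snd \<omega>)"
    and p_def: "\<And>t \<omega>. p t \<omega> = P *v (x t \<omega> - cbar M1 (x t) \<omega>) + Pbar *v cbar M1 (x t) \<omega>"
begin

definition closed_loop_dev :: "real^'d^'d" where
  "closed_loop_dev = A + (B1 ** G1 + B2 ** G2) ** P"

definition closed_loop_mean :: "real^'d^'d" where
  "closed_loop_mean = (A + Abar) + ((B1 + B1bar) ** L1 + (B2 + B2bar) ** L2) ** Pbar"

text \<open>The constant E[\<epsilon>1_0] moves the mean of the initial idiosyncratic noise into the common
  part, so that x_dev is centred.\<close>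

definition x_mean :: "nat \<Rightarrow> 'w0 \<Rightarrow> real^'d" where
  "x_mean = linear_recursion closed_loop_mean e0 (LINT w|M1. e1 0 w)"

definition x_dev :: "nat \<Rightarrow> 'w1 \<Rightarrow> real^'d" where
  "x_dev = linear_recursion closed_loop_dev e1 (- (LINT w|M1. e1 0 w))"

lemma x_mean_Suc: "x_mean (Suc t) w = closed_loop_mean *v x_mean t w + e0 (Suc t) w"
  by (simp add: x_mean_def)

lemma x_dev_Suc: "x_dev (Suc t) w = closed_loop_dev *v x_dev t w + e1 (Suc t) w"
  by (simp add: x_dev_def)

lemma noise_measurable: "e0 t \<in> borel_measurable M0" "e1 t \<in> borel_measurable M1"
  and noise_integrable: "integrable M0 (e0 t)" "integrable M1 (e1 t)"
  using noise0 noise1 unfolding noise_seq_def by auto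

lemma integrable_x_mean: "integrable M0 (x_mean t)"
  unfolding x_mean_def using M0 noise_integrable
  by (intro integrable_linear_recursion) (auto simp: prob_space_def)

lemma integrable_x_dev: "integrable M1 (x_dev t)"
  unfolding x_dev_def using M1 noise_integrable
  by (intro integrable_linear_recursion) (auto simp: prob_space_def)

lemma integral_x_dev: "(LINT w|M1. x_dev t w) = 0"
  unfolding x_dev_def using M1 noise_integrable noise1
  by (intro integral_linear_recursion_eq_0) (auto simp: noise_seq_def)

lemma cbar_mean_plus_dev:
  fixes K :: "real^'d^'m"
  assumes \<xi>: "\<And>\<eta>. \<eta> \<in> space (M0 \<Otimes>\<^sub>M M1) \<Longrightarrow> \<xi> \<eta> = c (fst \<eta>) + K *v x_dev t (snd \<eta>)"
    and \<omega>: "\<omega> \<in> space (M0 \<Otimes>\<^sub>M M1)"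
  shows "cbar M1 \<xi> \<omega> = c (fst \<omega>)"
proof -
  interpret M1: prob_space M1 by (rule M1)
  have "cbar M1 \<xi> \<omega> = (LINT w|M1. c (fst \<omega>) + K *v x_dev t w)"
    unfolding cbar_def using \<omega> by (intro Bochner_Integration.integral_cong) (auto simp: \<xi> space_pair_measure)
  also have "\<dots> = c (fst \<omega>) + K *v (LINT w|M1. x_dev t w)"
    using integrable_x_dev
    by (simp add: Bochner_Integration.integral_add integrable_bounded_linear[OF matrix_vector_mul_bounded_linear]
        integral_bounded_linear[OF matrix_vector_mul_bounded_linear] M1.prob_space)
  finally show ?thesis by (simp add: integral_x_dev)
qed

lemma feedback_decomposition:
  fixes K Kbar :: "real^'d^'m"
  assumes q: "\<And>\<omega>. q \<omega> = K *v (x t \<omega> - cbar M1 (x t) \<omega>) + Kbar *v cbar M1 (x t) \<omega>"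
    and x_t: "\<And>\<eta>. \<eta> \<in> space (M0 \<Otimes>\<^sub>M M1) \<Longrightarrow> x t \<eta> = x_mean t (fst \<eta>) + x_dev t (snd \<eta>)"
    and \<omega>: "\<omega> \<in> space (M0 \<Otimes>\<^sub>M M1)"
  shows "q \<omega> = K *v x_dev t (snd \<omega>) + Kbar *v x_mean t (fst \<omega>)"
    and "cbar M1 q \<omega> = Kbar *v x_mean t (fst \<omega>)"
proof -
  have cbar_x_t: "cbar M1 (x t) \<eta> = x_mean t (fst \<eta>)" if "\<eta> \<in> space (M0 \<Otimes>\<^sub>M M1)" for \<eta>
    using x_t that by (intro cbar_mean_plus_dev[where K="mat 1"]) auto
  then show "q \<omega> = K *v x_dev t (snd \<omega>) + Kbar *v x_mean t (fst \<omega>)"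
    using \<omega> by (simp add: q x_t)
  show "cbar M1 q \<omega> = Kbar *v x_mean t (fst \<omega>)"
    using \<omega> cbar_x_t by (intro cbar_mean_plus_dev[where K=K]) (simp add: q x_t add.commute)
qed

lemma x_decomposition:
  "\<omega> \<in> space (M0 \<Otimes>\<^sub>M M1) \<Longrightarrow> x t \<omega> = x_mean t (fst \<omega>) + x_dev t (snd \<omega>)"
proof (induction t arbitrary: \<omega>)
  case 0
  then show ?case by (simp add: x0 x_mean_def x_dev_def)
next
  case (Suc t)
  note u1 = feedback_decomposition[OF u1_def[unfolded matrix_vector_mul_assoc] Suc.IH Suc.prems]
  note u2 = feedback_decomposition[OF u2_def[unfolded matrix_vector_mul_assoc] Suc.IH Suc.prems]
  note x = feedback_decomposition[where K="mat 1" and Kbar="mat 1", OF _ Suc.IH Suc.prems]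
  show ?case
    using xSuc[OF Suc.prems] u1 u2 x[of "x t"]
    by (simp add: x_mean_Suc x_dev_Suc closed_loop_mean_def closed_loop_dev_def
        algebra_simps flip: matrix_vector_mul_assoc)
qed

lemma cbar_x: "\<omega> \<in> space (M0 \<Otimes>\<^sub>M M1) \<Longrightarrow> cbar M1 (x t) \<omega> = x_mean t (fst \<omega>)"
  using feedback_decomposition(2)[where K="mat 1" and Kbar="mat 1", OF _ x_decomposition] by simp

lemma p_decomposition:
  assumes "\<omega> \<in> space (M0 \<Otimes>\<^sub>M M1)"
  shows "p t \<omega> = P *v x_dev t (snd \<omega>) + Pbar *v x_mean t (fst \<omega>)"
    and "cbar M1 (p t) \<omega> = Pbar *v x_mean t (fst \<omega>)"
  using feedback_decomposition[OF p_def x_decomposition assms] by auto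

text \<open>Player 1 uses (c, k) = (2, -1/2), player 2 uses (c, k) = (-2, 1/2).\<close>

lemma first_order_condition:
  fixes R Rbar :: "real^'m^'m" and B Bbar :: "real^'m^'d" and G L :: "real^'d^'m"
  assumes RG: "R ** G = k *\<^sub>R transpose B" and RL: "(R + Rbar) ** L = k *\<^sub>R transpose (B + Bbar)"
    and ck: "c * k = -1"
    and u: "\<And>t \<omega>. u t \<omega> = G *v (P *v (x t \<omega> - cbar M1 (x t) \<omega>)) + L *v (Pbar *v cbar M1 (x t) \<omega>)"
  shows "AE \<omega> in M0 \<Otimes>\<^sub>M M1. transpose B *v p t \<omega> + c *\<^sub>R (R *v u t \<omega>)
           + transpose Bbar *v cbar M1 (p t) \<omega> + c *\<^sub>R (Rbar *v cbar M1 (u t) \<omega>) = 0"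
proof (rule AE_I2)
  fix \<omega> assume \<omega>: "\<omega> \<in> space (M0 \<Otimes>\<^sub>M M1)"
  note u_t = feedback_decomposition[OF u[of t, unfolded matrix_vector_mul_assoc] x_decomposition \<omega>]
  show "transpose B *v p t \<omega> + c *\<^sub>R (R *v u t \<omega>)
      + transpose Bbar *v cbar M1 (p t) \<omega> + c *\<^sub>R (Rbar *v cbar M1 (u t) \<omega>) = 0"
    using first_order_identity[OF RG RL ck, of "P *v x_dev t (snd \<omega>)" "Pbar *v x_mean t (fst \<omega>)"]
    by (simp add: p_decomposition[OF \<omega>] u_t matrix_vector_mul_assoc)
qed

lemma measurable_p_noise_filt: "p t \<in> borel_measurable (noise_filt M0 M1 e0 e1 t)"
proof -
  have "(\<lambda>\<omega>. x_mean t (fst \<omega>)) \<in> borel_measurable (noise_filt M0 M1 e0 e1 t)"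
    unfolding x_mean_def by (intro measurable_linear_recursion measurable_noise_filt_fst)
  moreover have "(\<lambda>\<omega>. x_dev t (snd \<omega>)) \<in> borel_measurable (noise_filt M0 M1 e0 e1 t)"
    unfolding x_dev_def by (intro measurable_linear_recursion measurable_noise_filt_snd)
  ultimately have "(\<lambda>\<omega>. P *v x_dev t (snd \<omega>) + Pbar *v x_mean t (fst \<omega>)) \<in> borel_measurable (noise_filt M0 M1 e0 e1 t)"
    by measurable
  then show ?thesis
    by (rule measurable_cong[THEN iffD1, rotated]) (simp add: p_decomposition)
qed

lemma integrable_p: "integrable (M0 \<Otimes>\<^sub>M M1) (p t)"
proof -
  have "integrable (M0 \<Otimes>\<^sub>M M1) (\<lambda>\<omega>. P *v x_dev t (snd \<omega>) + Pbar *v x_mean t (fst \<omega>))"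
    using integrable_compose_snd[OF M0 M1 integrable_x_dev] integrable_compose_fst[OF M1 integrable_x_mean]
    by (intro Bochner_Integration.integrable_add integrable_bounded_linear[OF matrix_vector_mul_bounded_linear])
  then show ?thesis
    using Bochner_Integration.integrable_cong[OF refl, of "M0 \<Otimes>\<^sub>M M1" "p t"] by (simp add: p_decomposition)
qed

lemma adjoint_target_decomposition:
  fixes Q Qbar :: "real^'d^'d"
  assumes "\<gamma> \<noteq> 0"
    and ricP: "\<gamma> *\<^sub>R ((transpose A ** P + 2 *\<^sub>R Q) ** (A + (B1 ** G1 + B2 ** G2) ** P)) = P"
    and ricPbar: "\<gamma> *\<^sub>R ((transpose (A + Abar) ** Pbar + 2 *\<^sub>R (Q + Qbar))
                 ** ((A + Abar) + ((B1 + B1bar) ** L1 + (B2 + B2bar) ** L2) ** Pbar)) = Pbar"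
    and \<omega>: "\<omega> \<in> space (M0 \<Otimes>\<^sub>M M1)"
  shows "transpose A *v p (Suc t) \<omega> + 2 *\<^sub>R (Q *v x (Suc t) \<omega>)
           + transpose Abar *v cbar M1 (p (Suc t)) \<omega> + 2 *\<^sub>R (Qbar *v cbar M1 (x (Suc t)) \<omega>)
         = (1 / \<gamma>) *\<^sub>R p t \<omega> + ((transpose (A + Abar) ** Pbar + 2 *\<^sub>R (Q + Qbar)) *v e0 (Suc t) (fst \<omega>)
             + (transpose A ** P + 2 *\<^sub>R Q) *v e1 (Suc t) (snd \<omega>))"
proof -
  define K K' where "K = transpose A ** P + 2 *\<^sub>R Q" and "K' = transpose (A + Abar) ** Pbar + 2 *\<^sub>R (Q + Qbar)"
  define a b where "a = x_mean (Suc t) (fst \<omega>)" and "b = x_dev (Suc t) (snd \<omega>)"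
  have "K ** closed_loop_dev = (1 / \<gamma>) *\<^sub>R P" "K' ** closed_loop_mean = (1 / \<gamma>) *\<^sub>R Pbar"
    using arg_cong[OF ricP, of "scaleR (1 / \<gamma>)"] arg_cong[OF ricPbar, of "scaleR (1 / \<gamma>)"] \<open>\<gamma> \<noteq> 0\<close>
    by (simp_all add: K_def K'_def closed_loop_dev_def closed_loop_mean_def)
  then have "K *v b + K' *v a = (1 / \<gamma>) *\<^sub>R p t \<omega> + (K' *v e0 (Suc t) (fst \<omega>) + K *v e1 (Suc t) (snd \<omega>))"
    unfolding a_def b_def x_mean_Suc x_dev_Suc p_decomposition(1)[OF \<omega>]
    by (simp add: matrix_vector_right_distrib matrix_vector_mul_assoc algebra_simps scaleR_matrix_vector_assoc)
  moreover have "transpose A *v p (Suc t) \<omega> + 2 *\<^sub>R (Q *v x (Suc t) \<omega>)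
           + transpose Abar *v cbar M1 (p (Suc t)) \<omega> + 2 *\<^sub>R (Qbar *v cbar M1 (x (Suc t)) \<omega>)
         = K *v b + K' *v a"
    unfolding a_def b_def K_def K'_def p_decomposition[OF \<omega>] x_decomposition[OF \<omega>] cbar_x[OF \<omega>]
    by (simp add: algebra_simps transpose_add scaleR_matrix_vector_assoc flip: matrix_vector_mul_assoc)
  ultimately show ?thesis
    by (simp add: K_def K'_def)
qed

lemma adjoint_process_feedback:
  fixes Q Qbar :: "real^'d^'d"
  assumes "\<gamma> \<noteq> 0"
    and ricP: "\<gamma> *\<^sub>R ((transpose A ** P + 2 *\<^sub>R Q) ** (A + (B1 ** G1 + B2 ** G2) ** P)) = P"
    and ricPbar: "\<gamma> *\<^sub>R ((transpose (A + Abar) ** Pbar + 2 *\<^sub>R (Q + Qbar))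
                 ** ((A + Abar) + ((B1 + B1bar) ** L1 + (B2 + B2bar) ** L2) ** Pbar)) = Pbar"
  shows "adjoint_process M0 M1 e0 e1 \<gamma> A Abar Q Qbar x p"
  unfolding adjoint_process_def
proof (intro conjI allI)
  fix t
  show "p t \<in> borel_measurable (noise_filt M0 M1 e0 e1 t)"
    by (rule measurable_p_noise_filt)
  define K K' where "K = transpose A ** P + 2 *\<^sub>R Q" and "K' = transpose (A + Abar) ** Pbar + 2 *\<^sub>R (Q + Qbar)"
  interpret sigma_finite_subalgebra "M0 \<Otimes>\<^sub>M M1" "noise_filt M0 M1 e0 e1 t"
    using M0 M1 noise_measurable by (intro sigma_finite_subalgebra_noise_filt)
  have "AE \<omega> in M0 \<Otimes>\<^sub>M M1. vcond_exp (M0 \<Otimes>\<^sub>M M1) (noise_filt M0 M1 e0 e1 t)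
          (\<lambda>\<eta>. transpose A *v p (Suc t) \<eta> + 2 *\<^sub>R (Q *v x (Suc t) \<eta>)
               + transpose Abar *v cbar M1 (p (Suc t)) \<eta> + 2 *\<^sub>R (Qbar *v cbar M1 (x (Suc t)) \<eta>)) \<omega>
        = (1 / \<gamma>) *\<^sub>R p t \<omega>"
  proof (rule vcond_exp_measurable_plus_orthogonal)
    show "integrable (M0 \<Otimes>\<^sub>M M1) (\<lambda>\<omega>. (1 / \<gamma>) *\<^sub>R p t \<omega>)"
      using integrable_p by (rule integrable_scaleR_right)
    show "(\<lambda>\<omega>. (1 / \<gamma>) *\<^sub>R p t \<omega>) \<in> borel_measurable (noise_filt M0 M1 e0 e1 t)"
      using measurable_p_noise_filt by measurable
    show "integrable (M0 \<Otimes>\<^sub>M M1) (\<lambda>\<omega>. K' *v e0 (Suc t) (fst \<omega>) + K *v e1 (Suc t) (snd \<omega>))"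
      using integrable_compose_fst[OF M1 noise_integrable(1)] integrable_compose_snd[OF M0 M1 noise_integrable(2)]
      by (intro Bochner_Integration.integrable_add integrable_bounded_linear[OF matrix_vector_mul_bounded_linear])
    show "(\<integral>\<omega>. indicator S \<omega> * (K' *v e0 (Suc t) (fst \<omega>) + K *v e1 (Suc t) (snd \<omega>)) $ i \<partial>(M0 \<Otimes>\<^sub>M M1)) = 0"
      if "S \<in> sets (noise_filt M0 M1 e0 e1 t)" for S i
      using integral_indicator_noise_filt_mult_next[OF M0 M1 noise0 noise1 that,
          of "\<lambda>v. (K' *v v) $ i" "\<lambda>v. (K *v v) $ i"]
      by (simp add: bounded_linear_compose[OF bounded_linear_vec_nth matrix_vector_mul_bounded_linear])
  qed (use adjoint_target_decomposition[OF assms] in \<open>simp add: K_def K'_def\<close>)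
  then show "AE \<omega> in M0 \<Otimes>\<^sub>M M1. p t \<omega> = \<gamma> *\<^sub>R vcond_exp (M0 \<Otimes>\<^sub>M M1) (noise_filt M0 M1 e0 e1 t)
          (\<lambda>\<eta>. transpose A *v p (Suc t) \<eta> + 2 *\<^sub>R (Q *v x (Suc t) \<eta>)
               + transpose Abar *v cbar M1 (p (Suc t)) \<eta> + 2 *\<^sub>R (Qbar *v cbar M1 (x (Suc t)) \<eta>)) \<omega>"
    by eventually_elim (simp add: \<open>\<gamma> \<noteq> 0\<close>)
qed

end

theorem mainTheorem4:
  fixes M0 :: "'w0 measure" and M1 :: "'w1 measure"
    and e0 :: "nat \<Rightarrow> 'w0 \<Rightarrow> real^'d" and e1 :: "nat \<Rightarrow> 'w1 \<Rightarrow> real^'d"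
    and \<gamma> :: real
    and A Abar Q Qbar P Pbar :: "real^'d^'d"
    and B1 B1bar B2 B2bar :: "real^'l^'d"
    and R1 R1bar R2 R2bar :: "real^'l^'l"
    and x :: "nat \<Rightarrow> 'w0 \<times> 'w1 \<Rightarrow> real^'d"
    and u1 u2 :: "nat \<Rightarrow> 'w0 \<times> 'w1 \<Rightarrow> real^'l"
    and p :: "nat \<Rightarrow> 'w0 \<times> 'w1 \<Rightarrow> real^'d"
  assumes M0: "prob_space M0" and M1: "prob_space M1"
    and noise0: "noise_seq M0 e0" and noise1: "noise_seq M1 e1"
    and \<gamma>: "0 < \<gamma>" "\<gamma> \<le> 1"
    and symQ: "symmetric_mat Q" and symQbar: "symmetric_mat Qbar"
    and R1: "pos_def_mat R1" and R1bar: "symmetric_mat R1bar" and R1R1bar: "pos_def_mat (R1 + R1bar)"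
    and R2: "pos_def_mat R2" and R2bar: "symmetric_mat R2bar" and R2R2bar: "pos_def_mat (R2 + R2bar)"
    and symP: "symmetric_mat P" and symPbar: "symmetric_mat Pbar"
    and ricP: "\<gamma> *\<^sub>R ((transpose A ** P + 2 *\<^sub>R Q)
                 ** (A + (B1 ** gain 1 R1 B1 + B2 ** gain 2 R2 B2) ** P)) = P"
    and ricPbar: "\<gamma> *\<^sub>R ((transpose (A + Abar) ** Pbar + 2 *\<^sub>R (Q + Qbar))
                 ** ((A + Abar) + ((B1 + B1bar) ** gain 1 (R1 + R1bar) (B1 + B1bar)
                                   + (B2 + B2bar) ** gain 2 (R2 + R2bar) (B2 + B2bar)) ** Pbar)) = Pbar"
    and u1_def: "\<And>t \<omega>. u1 t \<omega> = gain 1 R1 B1 *v (P *v (x t \<omega> - cbar M1 (x t) \<omega>))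
                             + gain 1 (R1 + R1bar) (B1 + B1bar) *v (Pbar *v cbar M1 (x t) \<omega>)"
    and u2_def: "\<And>t \<omega>. u2 t \<omega> = gain 2 R2 B2 *v (P *v (x t \<omega> - cbar M1 (x t) \<omega>))
                             + gain 2 (R2 + R2bar) (B2 + B2bar) *v (Pbar *v cbar M1 (x t) \<omega>)"
    and x0: "\<And>\<omega>. \<omega> \<in> space (M0 \<Otimes>\<^sub>M M1) \<Longrightarrow> x 0 \<omega> = e0 0 (fst \<omega>) + e1 0 (snd \<omega>)"
    and xSuc: "\<And>t \<omega>. \<omega> \<in> space (M0 \<Otimes>\<^sub>M M1) \<Longrightarrow>
       x (Suc t) \<omega> = A *v x t \<omega> + Abar *v cbar M1 (x t) \<omega>
                     + B1 *v u1 t \<omega> + B1bar *v cbar M1 (u1 t) \<omega>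
                     + B2 *v u2 t \<omega> + B2bar *v cbar M1 (u2 t) \<omega>
                     + e0 (Suc t) (fst \<omega>) + e1 (Suc t) (snd \<omega>)"
    and p_def: "\<And>t \<omega>. p t \<omega> = P *v (x t \<omega> - cbar M1 (x t) \<omega>) + Pbar *v cbar M1 (x t) \<omega>"
  shows "adjoint_process M0 M1 e0 e1 \<gamma> A Abar Q Qbar x p
    \<and> (\<forall>t. AE \<omega> in (M0 \<Otimes>\<^sub>M M1).
          transpose B1 *v p t \<omega> + 2 *\<^sub>R (R1 *v u1 t \<omega>)
          + transpose B1bar *v cbar M1 (p t) \<omega> + 2 *\<^sub>R (R1bar *v cbar M1 (u1 t) \<omega>) = 0)
    \<and> (\<forall>t. AE \<omega> in (M0 \<Otimes>\<^sub>M M1).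
          transpose B2 *v p t \<omega> - 2 *\<^sub>R (R2 *v u2 t \<omega>)
          + transpose B2bar *v cbar M1 (p t) \<omega> - 2 *\<^sub>R (R2bar *v cbar M1 (u2 t) \<omega>) = 0)"
proof -
  interpret mean_field_feedback M0 M1 e0 e1 A Abar P Pbar B1 B1bar B2 B2bar
      "gain 1 R1 B1" "gain 1 (R1 + R1bar) (B1 + B1bar)" "gain 2 R2 B2" "gain 2 (R2 + R2bar) (B2 + B2bar)"
      x u1 u2 p
    by (rule mean_field_feedback.intro[OF M0 M1 noise0 noise1 u1_def u2_def x0 xSuc p_def])
  have "adjoint_process M0 M1 e0 e1 \<gamma> A Abar Q Qbar x p"
    using \<gamma>(1) ricP ricPbar by (intro adjoint_process_feedback) auto
  moreover have "AE \<omega> in M0 \<Otimes>\<^sub>M M1. transpose B1 *v p t \<omega> + 2 *\<^sub>R (R1 *v u1 t \<omega>)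
      + transpose B1bar *v cbar M1 (p t) \<omega> + 2 *\<^sub>R (R1bar *v cbar M1 (u1 t) \<omega>) = 0" for t
    by (rule first_order_condition[OF matrix_mul_gain[OF R1] matrix_mul_gain[OF R1R1bar] _ u1_def]) simp
  moreover have "AE \<omega> in M0 \<Otimes>\<^sub>M M1. transpose B2 *v p t \<omega> + (-2) *\<^sub>R (R2 *v u2 t \<omega>)
      + transpose B2bar *v cbar M1 (p t) \<omega> + (-2) *\<^sub>R (R2bar *v cbar M1 (u2 t) \<omega>) = 0" for t
    by (rule first_order_condition[OF matrix_mul_gain[OF R2] matrix_mul_gain[OF R2R2bar] _ u2_def]) simp
  ultimately show ?thesis
    by simp
qed

end
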